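(* Suppose conditions (A.2) and (A.3) hold. Let $\gamma_k:=\sum_{i=0}^{k-1}\alpha_i$, let $g:(0,\infty)\to(0,\infty)$, define $\beta_k:=g(\gamma_k)$, let $T>0$ and let $\{m_k\}_k$ be the time indices associated with $T$. Assume (i) $\sum_{k=0}^\infty\alpha_k^2g(\gamma_k)^2\sigma_k^2<\infty$; (ii) there is an interval $I=[\iota,\infty)$ such that $g'(x)>0$ for all $x\in I$. Then condition (A.4) holds (with this sequence $\{\beta_k\}_k$), and for every $\delta\in(0,1)$ there is $N_\delta\in\mathbb N$ such that (a) $\delta Tk\le\gamma_{m_{n+k}}-\gamma_{m_n}\le Tk$ for all $k\in\mathbb N$ and $n\ge N_\delta$; (b) $\sum_{k=n}^\infty g(\gamma_{m_k})^{-2\vartheta}\le g(\gamma_{m_n})^{-2\vartheta}+(\delta T)^{-1}\int_{\gamma_{m_n}}^\infty g(t)^{-2\vartheta}\,\mathrm dt$ for all $\vartheta\in(0,1)$ and $n\ge N_\delta$.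
   Context: Setting: a filtered probability space $(\Omega,\mathcal F,\{\mathcal F_k\}_k,\mathbb P)$, $f:\mathbb R^d\to\mathbb R$ continuously differentiable, step sizes $\{\alpha_k\}_k\subset(0,\infty)$, and a stochastic process $\{x^k\}_k$ ($x^k$ $\mathcal F_k$-measurable) with $\mathcal F_{k+1}$-measurable stochastic gradients $g^k$ and errors $e^k=g^k-\nabla f(x^k)$ (as generated by the normal map-based stochastic proximal gradient method $z^{k+1}=z^k-\alpha_k(g^k+(z^k-\mathrm{prox}_{\lambda\varphi}(z^k))/\lambda)$, $x^{k}=\mathrm{prox}_{\lambda\varphi}(z^{k})$). Conditions: (A.2) $\mathbb E[g^k\mid\mathcal F_k]=\nabla f(x^k)$ a.s. and there is $\{\sigma_k\}_k\subseteq\mathbb R_+$ with $\mathbb E\|e^k\|^2\le\sigma_k^2$ for all $k$. (A.3) $\sum_k\alpha_k=\infty$, $\alpha_k\to0$. (A.4) There is a positive sequence $\{\beta_k\}_k$, non-decreasing for all $k$ sufficiently large, with $\sum_k\alpha_k^2\beta_k^2\sigma_k^2<\infty$. Time indices: $\tau_{k,n}=\sum_{i=k}^{n-1}\alpha_i$, $\varpi(k,T)=\max\{k+1,\sup\{n\ge k:\tau_{k,n}\le T\}\}$, $m_0=0$, $m_{k+1}=\varpi(m_k,T)$. *)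

theory Defs
  imports "HOL-Analysis.Analysis"
begin

definition tau :: "(nat \<Rightarrow> real) \<Rightarrow> nat \<Rightarrow> nat \<Rightarrow> real" where
  "tau \<alpha> k n = (\<Sum>i\<in>{k..<n}. \<alpha> i)"

definition gam :: "(nat \<Rightarrow> real) \<Rightarrow> nat \<Rightarrow> real" where
  "gam \<alpha> k = (\<Sum>i<k. \<alpha> i)"

definition varpi :: "(nat \<Rightarrow> real) \<Rightarrow> real \<Rightarrow> nat \<Rightarrow> nat" where
  "varpi \<alpha> T k = max (k + 1) (Sup {n. n \<ge> k \<and> tau \<alpha> k n \<le> T})"

primrec mseq :: "(nat \<Rightarrow> real) \<Rightarrow> real \<Rightarrow> nat \<Rightarrow> nat" where
  "mseq \<alpha> T 0 = 0"
| "mseq \<alpha> T (Suc k) = varpi \<alpha> T (mseq \<alpha> T k)"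

definition condA4 :: "(nat \<Rightarrow> real) \<Rightarrow> (nat \<Rightarrow> real) \<Rightarrow> (nat \<Rightarrow> real) \<Rightarrow> bool" where
  "condA4 \<alpha> \<sigma> \<beta> \<longleftrightarrow>
     (\<forall>k. \<beta> k > 0) \<and> (\<exists>K. \<forall>k\<ge>K. \<beta> k \<le> \<beta> (Suc k)) \<and>
     summable (\<lambda>k. (\<alpha> k)\<^sup>2 * (\<beta> k)\<^sup>2 * (\<sigma> k)\<^sup>2)"

end

theory Submission
  imports Defs
begin

text \<open>
  Since \<alpha>_k tends to 0, eventually every step is shorter than (1 - \<delta>) T. The index
  m_{k+1} is the last one whose partial sum from m_k stays within T, so one further step
  overshoots T; hence every block length \<gamma>(m_{k+1}) - \<gamma>(m_k) lies in [\<delta> T, T], and (a)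
  follows by summing blocks. Past \<iota> the function g is increasing, so g^(-2\<theta>) is decreasing
  and g(\<gamma>(m_{k+1}))^(-2\<theta>) is at most 1/(\<delta> T) times the integral of g^(-2\<theta>) over the
  block [\<gamma>(m_k), \<gamma>(m_{k+1})); the blocks are disjoint, which gives (b).
\<close>

lemma increment_bounds_imp_diff_bounds:
  fixes x :: "nat \<Rightarrow> real"
  assumes "\<And>j. N \<le> j \<Longrightarrow> a \<le> x (Suc j) - x j \<and> x (Suc j) - x j \<le> b" and "N \<le> n"
  shows "a * real k \<le> x (n + k) - x n \<and> x (n + k) - x n \<le> b * real k"
proof (induction k)
  case (Suc k)
  then show ?case
    using assms(1)[of "n + k"] assms(2) by (auto simp: algebra_simps)
qed simp

lemma sum_indicator_consecutive_intervals:
  fixes a :: "nat \<Rightarrow> 'a::linorder"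
  assumes "incseq a"
  shows "(\<Sum>k<K. indicator {a k..<a (Suc k)} t)
    = (indicator {a 0..<a K} t :: 'b::{comm_monoid_add,zero_neq_one})"
proof (induction K)
  case (Suc K)
  have "a 0 \<le> a K" "a K \<le> a (Suc K)"
    using assms by (auto simp: incseq_def)
  with Suc show ?case
    by (auto simp: indicator_def)
qed simp

lemma suminf_antimono_le_nn_integral:
  fixes h :: "real \<Rightarrow> real" and a :: "nat \<Rightarrow> real"
  assumes d: "0 < d" and gap: "\<And>k. a k + d \<le> a (Suc k)" and anti: "antimono_on {a 0..} h"
  shows "(\<Sum>k. ennreal (h (a k)))
    \<le> ennreal (h (a 0)) + ennreal (1 / d) * (\<integral>\<^sup>+ t\<in>{a 0..}. ennreal (h t) \<partial>lborel)"
proof -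
  let ?I = "\<lambda>k. {a k..<a (Suc k)}"
  let ?R = "\<integral>\<^sup>+ t\<in>{a 0..}. ennreal (h t) \<partial>lborel"
  have "a k \<le> a (Suc k)" for k
    using gap[of k] d by linarith
  then have "incseq a"
    by (rule incseq_SucI)
  then have a0: "a 0 \<le> a k" for k
    by (simp add: incseq_def)
  have piece: "ennreal d * ennreal (h (a (Suc k)))
      \<le> (\<integral>\<^sup>+ t. ennreal (h (a (Suc k))) * indicator (?I k) t \<partial>lborel)" for k
  proof -
    have "ennreal d \<le> emeasure lborel (?I k)"
      using gap[of k] d by (simp add: emeasure_lborel_Ico ennreal_leI)
    then show ?thesis
      by (simp add: nn_integral_cmult_indicator mult.commute[of "ennreal d"] mult_left_mono)
  qed
  have pointwise: "(\<Sum>k<K. ennreal (h (a (Suc k))) * indicator (?I k) t)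
      \<le> ennreal (h t) * indicator {a 0..} t" for K t
  proof -
    have "(\<Sum>k<K. ennreal (h (a (Suc k))) * indicator (?I k) t)
        \<le> (\<Sum>k<K. ennreal (h t) * indicator (?I k) t)"
    proof (intro sum_mono)
      fix k
      show "ennreal (h (a (Suc k))) * indicator (?I k) t \<le> ennreal (h t) * indicator (?I k) t"
      proof (cases "t \<in> ?I k")
        case True
        then have "h (a (Suc k)) \<le> h t"
          using a0[of k] by (intro monotone_onD[OF anti]) auto
        with True show ?thesis
          by (simp add: ennreal_leI)
      qed simp
    qed
    also have "\<dots> = ennreal (h t) * indicator {a 0..<a K} t"
      by (simp add: sum_distrib_left[symmetric] sum_indicator_consecutive_intervals[OF \<open>incseq a\<close>])
    also have "\<dots> \<le> ennreal (h t) * indicator {a 0..} t"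
      by (intro mult_left_mono) (auto simp: indicator_def)
    finally show ?thesis .
  qed
  have partial: "ennreal d * (\<Sum>k<K. ennreal (h (a (Suc k)))) \<le> ?R" for K
  proof -
    have "ennreal d * (\<Sum>k<K. ennreal (h (a (Suc k))))
        \<le> (\<Sum>k<K. \<integral>\<^sup>+ t. ennreal (h (a (Suc k))) * indicator (?I k) t \<partial>lborel)"
      unfolding sum_distrib_left by (intro sum_mono piece)
    also have "\<dots> = (\<integral>\<^sup>+ t. (\<Sum>k<K. ennreal (h (a (Suc k))) * indicator (?I k) t) \<partial>lborel)"
      by (rule nn_integral_sum[symmetric]) simp
    also have "\<dots> \<le> ?R"
      by (intro nn_integral_mono pointwise)
    finally show ?thesis .
  qed
  have tail: "(\<Sum>k. ennreal (h (a (Suc k)))) \<le> ennreal (1 / d) * ?R"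
  proof (rule suminf_le_const[OF summableI])
    fix K
    have "(\<Sum>k<K. ennreal (h (a (Suc k))))
        = ennreal (1 / d) * (ennreal d * (\<Sum>k<K. ennreal (h (a (Suc k)))))"
      using d by (simp add: mult.assoc[symmetric] ennreal_mult[symmetric])
    also have "\<dots> \<le> ennreal (1 / d) * ?R"
      by (intro mult_left_mono partial) simp
    finally show "(\<Sum>k<K. ennreal (h (a (Suc k)))) \<le> ennreal (1 / d) * ?R" .
  qed
  have "(\<lambda>k. ennreal (h (a k))) sums ((\<Sum>k. ennreal (h (a (Suc k)))) + ennreal (h (a 0)))"
    by (intro sums_Suc summable_sums summableI)
  with tail show ?thesis
    by (simp add: sums_unique[symmetric] add.commute add_left_mono)
qed

lemma DERIV_pos_imp_mono_on_atLeast: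
  fixes g :: "real \<Rightarrow> real"
  assumes "\<forall>x\<ge>a. \<exists>D>0. (g has_real_derivative D) (at x)"
  shows "mono_on {a..} g"
proof (rule mono_onI)
  fix x y assume "x \<in> {a..}" "y \<in> {a..}" "x \<le> y"
  then consider "x = y" | "a \<le> x" "x < y"
    by fastforce
  then show "g x \<le> g y"
  proof cases
    case 2
    have "\<exists>D. (g has_real_derivative D) (at z) \<and> 0 < D" if "x \<le> z" for z
      using assms order_trans[OF \<open>a \<le> x\<close> that] by blast
    then have "g x < g y"
      using DERIV_pos_imp_increasing[OF \<open>x < y\<close>] by blast
    then show ?thesis
      by simp
  qed simp
qed

lemma antimono_on_powr_neg:
  fixes g :: "real \<Rightarrow> real"
  assumes "mono_on A g" and "\<And>x. x \<in> A \<Longrightarrow> 0 < g x" and "p \<le> 0"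
  shows "antimono_on A (\<lambda>t. g t powr p)"
proof (rule monotone_onI)
  fix x y assume "x \<in> A" "y \<in> A" "x \<le> y"
  then have "0 < g x" and "g x \<le> g y"
    using assms(1,2) by (auto intro: mono_onD)
  then show "g y powr p \<le> g x powr p"
    using assms(3) by (intro powr_mono2')
qed

lemma gam_Suc: "gam \<alpha> (Suc k) = gam \<alpha> k + \<alpha> k"
  by (simp add: gam_def)

lemma gam_nonneg:
  assumes "\<And>k. 0 \<le> \<alpha> k"
  shows "0 \<le> gam \<alpha> k"
  using assms by (simp add: gam_def sum_nonneg)

lemma incseq_gam:
  assumes "\<And>k. 0 \<le> \<alpha> k"
  shows "incseq (gam \<alpha>)"
  using assms by (intro incseq_SucI) (simp add: gam_Suc)

lemma tau_eq_gam_diff: "k \<le> n \<Longrightarrow> tau \<alpha> k n = gam \<alpha> n - gam \<alpha> k"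
  unfolding tau_def gam_def by (metis atLeast0LessThan sum_diff_nat_ivl zero_le)

lemma finite_tau_le:
  assumes "filterlim (\<lambda>n. \<Sum>i<n. \<alpha> i) at_top sequentially"
  shows "finite {n. k \<le> n \<and> tau \<alpha> k n \<le> T}"
proof -
  obtain M where M: "\<And>n. M \<le> n \<Longrightarrow> gam \<alpha> k + T < gam \<alpha> n"
    using assms unfolding filterlim_at_top_dense eventually_sequentially gam_def by blast
  have "n < M" if "k \<le> n" and "tau \<alpha> k n \<le> T" for n
    using that M[of n] by (cases "M \<le> n") (auto simp: tau_eq_gam_diff)
  then have "{n. k \<le> n \<and> tau \<alpha> k n \<le> T} \<subseteq> {..<M}"
    by blast
  then show ?thesis
    using finite_subset by blast
qed

lemma varpi_gt: "k < varpi \<alpha> T k"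
  by (simp add: varpi_def)

text \<open>
  Divergence makes the set in the definition of varpi finite, so its Sup is a Max; the step
  condition \<alpha> k \<le> T puts k + 1 into that set, so the fallback value k + 1 of the max is inactive.
\<close>

lemma varpi_gam_bounds:
  assumes "filterlim (\<lambda>n. \<Sum>i<n. \<alpha> i) at_top sequentially" and "\<alpha> k \<le> T"
  shows "gam \<alpha> (varpi \<alpha> T k) - gam \<alpha> k \<le> T
    \<and> T < gam \<alpha> (varpi \<alpha> T k) + \<alpha> (varpi \<alpha> T k) - gam \<alpha> k"
proof -
  define S where "S = {n. k \<le> n \<and> tau \<alpha> k n \<le> T}"
  have fin: "finite S"
    unfolding S_def using assms(1) by (rule finite_tau_le)
  have "Suc k \<in> S"
    using assms(2) by (simp add: S_def tau_def)
  then have "Suc k \<le> Max S"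
    by (rule Max_ge[OF fin])
  moreover have "Sup S = Max S"
    using fin \<open>Suc k \<in> S\<close> by (intro cSup_eq_Max) auto
  ultimately have "varpi \<alpha> T k = Max S"
    by (simp add: varpi_def S_def[symmetric])
  moreover have "Max S \<in> S"
    using fin \<open>Suc k \<in> S\<close> by (intro Max_in) auto
  moreover have "Suc (Max S) \<notin> S"
    using fin Max_ge not_less_eq_eq by blast
  ultimately show ?thesis
    by (auto simp: S_def tau_eq_gam_diff gam_Suc)
qed

lemma mseq_ge: "k \<le> mseq \<alpha> T k"
  by (induction k) (auto simp: Suc_le_eq intro: le_less_trans varpi_gt)

lemma eventually_gam_mseq_ge:
  assumes "\<And>k. 0 \<le> \<alpha> k" and "filterlim (\<lambda>n. \<Sum>i<n. \<alpha> i) at_top sequentially"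
  shows "\<forall>\<^sub>F j in sequentially. c \<le> gam \<alpha> (mseq \<alpha> T j)"
proof -
  have "\<forall>\<^sub>F k in sequentially. c \<le> gam \<alpha> k"
    using assms(2) by (simp add: gam_def[abs_def] filterlim_at_top)
  then show ?thesis
    using incseq_gam[OF assms(1)] mseq_ge by (elim eventually_mono) (meson incseqD order_trans)
qed

lemma eventually_gam_mseq_increment_bounds:
  assumes "filterlim (\<lambda>n. \<Sum>i<n. \<alpha> i) at_top sequentially" and "\<alpha> \<longlonglongrightarrow> 0"
    and "0 \<le> \<delta>" "\<delta> < 1" "0 < T"
  shows "\<forall>\<^sub>F j in sequentially.
    \<delta> * T \<le> gam \<alpha> (mseq \<alpha> T (Suc j)) - gam \<alpha> (mseq \<alpha> T j)
    \<and> gam \<alpha> (mseq \<alpha> T (Suc j)) - gam \<alpha> (mseq \<alpha> T j) \<le> T"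
proof -
  have "\<forall>\<^sub>F i in sequentially. \<alpha> i < (1 - \<delta>) * T"
    using assms by (intro order_tendstoD) auto
  then obtain N where N: "\<And>i. N \<le> i \<Longrightarrow> \<alpha> i < (1 - \<delta>) * T"
    unfolding eventually_sequentially by blast
  have "(1 - \<delta>) * T \<le> T"
    using assms(3,5) by (simp add: algebra_simps)
  have "\<delta> * T \<le> gam \<alpha> (mseq \<alpha> T (Suc j)) - gam \<alpha> (mseq \<alpha> T j)
    \<and> gam \<alpha> (mseq \<alpha> T (Suc j)) - gam \<alpha> (mseq \<alpha> T j) \<le> T" if "N \<le> j" for j
  proof -
    have "N \<le> mseq \<alpha> T j" and "N \<le> mseq \<alpha> T (Suc j)"
      using that mseq_ge le_trans le_SucI by blast+
    then have "\<alpha> (mseq \<alpha> T j) \<le> T" and "\<alpha> (mseq \<alpha> T (Suc j)) < (1 - \<delta>) * T"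
      using N \<open>(1 - \<delta>) * T \<le> T\<close> by (auto intro: less_imp_le less_le_trans)
    with varpi_gam_bounds[OF assms(1) this(1)] show ?thesis
      by (simp add: algebra_simps)
  qed
  then show ?thesis
    unfolding eventually_sequentially by blast
qed

lemma condA4_comp_gam:
  assumes "\<And>k. 0 < \<alpha> k" and "\<And>x. 0 \<le> x \<Longrightarrow> 0 < g x" and "mono_on {\<iota>..} g"
    and "filterlim (\<lambda>n. \<Sum>i<n. \<alpha> i) at_top sequentially"
    and "summable (\<lambda>k. (\<alpha> k)\<^sup>2 * (g (gam \<alpha> k))\<^sup>2 * (\<sigma> k)\<^sup>2)"
  shows "condA4 \<alpha> \<sigma> (\<lambda>k. g (gam \<alpha> k))"
proof -
  obtain K where K: "\<And>k. K \<le> k \<Longrightarrow> \<iota> \<le> gam \<alpha> k"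
    using assms(4) unfolding gam_def filterlim_at_top eventually_sequentially by blast
  have "g (gam \<alpha> k) \<le> g (gam \<alpha> (Suc k))" if "K \<le> k" for k
    using K[OF that] assms(1)[of k] by (intro mono_onD[OF assms(3)]) (auto simp: gam_Suc)
  moreover have "0 \<le> gam \<alpha> k" for k
    using assms(1) by (intro gam_nonneg less_imp_le)
  ultimately show ?thesis
    using assms(2,5) unfolding condA4_def by auto
qed

theorem lemma3p8:
  fixes \<alpha> \<sigma> :: "nat \<Rightarrow> real" and g :: "real \<Rightarrow> real" and T \<iota> :: real
  assumes alpha_pos: "\<forall>k. \<alpha> k > 0"
    and sigma_nonneg: "\<forall>k. \<sigma> k \<ge> 0"
    and A3_div: "filterlim (\<lambda>n. \<Sum>i<n. \<alpha> i) at_top sequentially"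
    and A3_lim: "\<alpha> \<longlonglongrightarrow> 0"
    and g_pos: "\<forall>x\<ge>0. g x > 0"
    and T_pos: "T > 0"
    and hyp_i: "summable (\<lambda>k. (\<alpha> k)\<^sup>2 * (g (gam \<alpha> k))\<^sup>2 * (\<sigma> k)\<^sup>2)"
    and hyp_ii: "\<forall>x\<ge>\<iota>. \<exists>D>0. (g has_real_derivative D) (at x)"
  shows "condA4 \<alpha> \<sigma> (\<lambda>k. g (gam \<alpha> k)) \<and>
    (\<forall>\<delta>. 0 < \<delta> \<and> \<delta> < 1 \<longrightarrow> (\<exists>N::nat.
       (\<forall>k n. n \<ge> N \<longrightarrow>
          \<delta> * T * real k \<le> gam \<alpha> (mseq \<alpha> T (n + k)) - gam \<alpha> (mseq \<alpha> T n) \<and>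
          gam \<alpha> (mseq \<alpha> T (n + k)) - gam \<alpha> (mseq \<alpha> T n) \<le> T * real k) \<and>
       (\<forall>\<theta> n. 0 < \<theta> \<and> \<theta> < 1 \<and> n \<ge> N \<longrightarrow>
          (\<Sum>k. ennreal (g (gam \<alpha> (mseq \<alpha> T (k + n))) powr (- 2 * \<theta>)))
          \<le> ennreal (g (gam \<alpha> (mseq \<alpha> T n)) powr (- 2 * \<theta>))
             + ennreal (1 / (\<delta> * T)) *
               (\<integral>\<^sup>+ t\<in>{gam \<alpha> (mseq \<alpha> T n)..}. ennreal (g t powr (- 2 * \<theta>)) \<partial>lborel))))"
proof -
  let ?G = "gam \<alpha>" and ?m = "mseq \<alpha> T"
  have \<alpha>_nonneg: "0 \<le> \<alpha> k" for k
    using alpha_pos less_imp_le by blast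
  have g_mono: "mono_on {\<iota>..} g"
    using hyp_ii by (rule DERIV_pos_imp_mono_on_atLeast)
  have A4: "condA4 \<alpha> \<sigma> (\<lambda>k. g (?G k))"
    using alpha_pos g_pos g_mono A3_div hyp_i by (intro condA4_comp_gam) auto
  show ?thesis
    apply (intro conjI A4 allI impI)
    subgoal premises \<delta> for \<delta>
    proof -
      obtain N where step: "\<And>j. N \<le> j \<Longrightarrow>
          \<delta> * T \<le> ?G (?m (Suc j)) - ?G (?m j) \<and> ?G (?m (Suc j)) - ?G (?m j) \<le> T"
        and iota: "\<And>j. N \<le> j \<Longrightarrow> \<iota> \<le> ?G (?m j)"
        using eventually_conj[OF eventually_gam_mseq_increment_bounds[OF A3_div A3_lim, of \<delta> T]
            eventually_gam_mseq_ge[OF \<alpha>_nonneg A3_div, of \<iota> T]] \<delta> T_pos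
        unfolding eventually_sequentially by auto
      show ?thesis
      proof (intro exI[of _ N] conjI allI impI)
        fix k n :: nat assume "N \<le> n"
        then show "\<delta> * T * real k \<le> ?G (?m (n + k)) - ?G (?m n)"
          and "?G (?m (n + k)) - ?G (?m n) \<le> T * real k"
          using increment_bounds_imp_diff_bounds[where x = "\<lambda>j. ?G (?m j)", OF step] by blast+
      next
        fix \<theta> :: real and n :: nat assume \<theta>: "0 < \<theta> \<and> \<theta> < 1 \<and> N \<le> n"
        have "antimono_on {?G (?m n)..} (\<lambda>t. g t powr (- 2 * \<theta>))"
          using iota[of n] gam_nonneg[of \<alpha> "?m n", OF \<alpha>_nonneg] \<theta> g_pos
          by (intro antimono_on_powr_neg mono_on_subset[OF g_mono]) auto
        moreover have "?G (?m (k + n)) + \<delta> * T \<le> ?G (?m (Suc k + n))" for k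
          using step[of "k + n"] \<theta> by simp
        ultimately show "(\<Sum>k. ennreal (g (?G (?m (k + n))) powr (- 2 * \<theta>)))
            \<le> ennreal (g (?G (?m n)) powr (- 2 * \<theta>)) + ennreal (1 / (\<delta> * T)) *
              (\<integral>\<^sup>+ t\<in>{?G (?m n)..}. ennreal (g t powr (- 2 * \<theta>)) \<partial>lborel)"
          using suminf_antimono_le_nn_integral[of "\<delta> * T" "\<lambda>k. ?G (?m (k + n))"] \<delta> T_pos by simp
      qed
    qed
    done
qed

end
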